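(* Let $n\ge2$, $\omega\in\mathbb{R}^n$, $k\in\mathbb{R}_{>0}^n$ satisfy (IC1) $\sum_\mu\omega_\mu=0$, (IC2) $\omega\ne0$, (IC3) $\left|\frac{\omega_1}{k_1}\right|\le\cdots\le\left|\frac{\omega_n}{k_n}\right|$, and (IC4) $k_1\ge k_2\ge\cdots\ge k_n$. For $\sigma\in\{-1,+1\}^n$ let $f_\sigma(R)=-R+\frac1n\sum_{\mu=1}^n\sigma_\mu\sqrt{k_\mu^2R-\omega_\mu^2}$. (1) If $\sigma=(+1,\ldots,+1)$ and $f_\sigma$ has no positive roots, then $f_{\sigma'}$ has no positive roots for every $\sigma'\in\{-1,+1\}^n$. (2) If $\sigma$ has exactly one entry equal to $-1$ and $f_\sigma$ has no positive roots, then $f_{\sigma'}$ has no positive roots for every $\sigma'\in\{-1,+1\}^n$ that is smaller than $\sigma$ in the binary ordering. (3) Suppose $\sigma$ has at least two entries equal to $-1$ and $f_\sigma$ has no positive roots. Let $\ell$ be the position of the second-to-last entry equal to $-1$ in $\sigma$, and write $\sigma=(\rho_1,\rho_2)$ with $\rho_1=(\sigma_1,\ldots,\sigma_{\ell-1},-1)$ and $\rho_2=(\sigma_{\ell+1},\ldots,\sigma_n)$. Then for every $\rho_2'\in\{-1,+1\}^{n-\ell}$ that is smaller than $\rho_2$ in the binary ordering, $f_{(\rho_1,\rho_2')}$ has no positive roots.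
   Context: Square roots are nonnegative real square roots; a positive root of $f_\sigma$ is a real $R>0$ with $k_\mu^2R-\omega_\mu^2\ge0$ for all $\mu$ and $f_\sigma(R)=0$. Binary ordering: a sign vector $\tau=(\tau_1,\ldots,\tau_m)\in\{-1,+1\}^m$ is identified with the integer whose binary digits, from most significant to least significant, are $b_1b_2\cdots b_m$ with $b_i=1$ if $\tau_i=+1$ and $b_i=0$ if $\tau_i=-1$ (e.g. $(+1,-1)\equiv 10_2=2$); vectors are compared via these integers. *)

theory Defs
  imports Complex_Main
begin

text \<open>Vectors in R^n and sign vectors are represented as lists of length n,
  indexed 0..n-1 (entry i corresponds to the paper's index i+1).\<close>

definition sign_vec :: "nat \<Rightarrow> int list \<Rightarrow> bool" where
  "sign_vec m s \<longleftrightarrow> length s = m \<and> set s \<subseteq> {-1, 1}"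

text \<open>Binary ordering: +1 is digit 1, -1 is digit 0, first entry most significant.\<close>
definition bin_val :: "int list \<Rightarrow> nat" where
  "bin_val s = foldl (\<lambda>a t. 2 * a + (if t = 1 then 1 else 0)) 0 s"

definition f_sigma :: "real list \<Rightarrow> real list \<Rightarrow> int list \<Rightarrow> real \<Rightarrow> real" where
  "f_sigma \<omega> k \<sigma> R = - R + (1 / real (length \<omega>)) *
      (\<Sum>\<mu><length \<omega>. real_of_int (\<sigma> ! \<mu>) * sqrt ((k ! \<mu>)^2 * R - (\<omega> ! \<mu>)^2))"

definition has_pos_root :: "real list \<Rightarrow> real list \<Rightarrow> int list \<Rightarrow> bool" where
  "has_pos_root \<omega> k \<sigma> \<longleftrightarrow> (\<exists>R>0. (\<forall>\<mu><length \<omega>. (k ! \<mu>)^2 * R - (\<omega> ! \<mu>)^2 \<ge> 0)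
      \<and> f_sigma \<omega> k \<sigma> R = 0)"

end

theory Submission
  imports Defs
begin

text \<open>The summands \<open>sqrt (k\<^sub>\<mu>\<^sup>2 R - \<omega>\<^sub>\<mu>\<^sup>2)\<close> are nonnegative and, by (IC3) and (IC4),
  non-increasing in \<open>\<mu>\<close>. A sign vector below \<open>\<sigma>\<close> in the binary ordering turns a \<open>+1\<close> of \<open>\<sigma>\<close>
  into \<open>-1\<close> at the first position where they differ; if at most one later entry is turned
  from \<open>-1\<close> into \<open>+1\<close>, that gain is outweighed by the earlier loss, so \<open>f\<^sub>\<sigma>' \<le> f\<^sub>\<sigma>\<close> wherever
  both are defined. A positive root of \<open>f\<^sub>\<sigma>'\<close> then makes \<open>f\<^sub>\<sigma>\<close> nonnegative there, while
  \<open>f\<^sub>\<sigma>(R) \<le> -R + (\<Sum>k) \<surd>R\<close> is negative for large \<open>R\<close>; by the intermediate value theorem \<open>f\<^sub>\<sigma>\<close>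
  has a positive root as well.\<close>

lemma foldl_bin_digits:
  fixes a :: nat
  shows "foldl (\<lambda>a t. 2 * a + (if t = (1::int) then 1 else 0)) a s
     = a * 2 ^ length s + foldl (\<lambda>a t. 2 * a + (if t = 1 then 1 else 0)) 0 s"
proof (induction s arbitrary: a)
  case (Cons x s)
  show ?case
    by (simp only: foldl_Cons Cons[of "2 * a + _"] Cons[of "2 * 0 + _"]) (simp add: algebra_simps)
qed simp

lemma bin_val_Cons: "bin_val (x # xs) = (if x = 1 then 2 ^ length xs else 0) + bin_val xs"
  unfolding bin_val_def by (subst foldl_Cons, subst foldl_bin_digits) simp

lemma bin_val_less_power: "bin_val xs < 2 ^ length xs"
proof (induction xs)
  case (Cons x xs)
  then show ?case by (simp add: bin_val_Cons)
qed (simp add: bin_val_def)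

lemma bin_val_less_imp_first_flip:
  assumes "length xs = length ys" "set xs \<subseteq> {-1, 1}" "set ys \<subseteq> {-1, 1}"
    and "bin_val xs < bin_val ys"
  obtains i where "i < length xs" "xs ! i = -1" "ys ! i = 1" "take i xs = take i ys"
  using assms
proof (induction xs arbitrary: ys thesis)
  case Nil
  then show ?case by (simp add: bin_val_def)
next
  case (Cons x xs)
  obtain y ys' where ys: "ys = y # ys'" using Cons.prems(2) by (cases ys) auto
  show ?case
  proof (cases "x = y")
    case True
    then have "bin_val xs < bin_val ys'"
      using Cons.prems(2,5) ys by (simp add: bin_val_Cons split: if_splits)
    then obtain i where "i < length xs" "xs ! i = -1" "ys' ! i = 1" "take i xs = take i ys'"
      using Cons.IH[of ys'] Cons.prems(2-4) ys by auto
    then show ?thesis using Cons.prems(1)[of "Suc i"] True ys by simp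
  next
    case False
    have "bin_val ys' < 2 ^ length xs" using bin_val_less_power[of ys'] Cons.prems(2) ys by simp
    then have "\<not> (x = 1 \<and> y = -1)" using Cons.prems(5) ys by (auto simp: bin_val_Cons)
    then have "x = -1" "y = 1" using False Cons.prems(3,4) ys by auto
    then show ?thesis using Cons.prems(1)[of 0] ys by simp
  qed
qed

lemma sign_vec_nth: "sign_vec n s \<Longrightarrow> i < n \<Longrightarrow> s ! i = -1 \<or> s ! i = 1"
  unfolding sign_vec_def using nth_mem by fastforce

lemma signed_sum_le_after_flip:
  fixes g :: "nat \<Rightarrow> real"
  assumes g_nonneg: "\<forall>\<mu><n. 0 \<le> g \<mu>"
    and g_antimono: "\<forall>i j. i \<le> j \<and> j < n \<longrightarrow> g j \<le> g i"
    and sv: "sign_vec n \<sigma>" "sign_vec n \<sigma>'"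
    and flip: "i < n" "\<sigma>' ! i = -1" "\<sigma> ! i = 1" "take i \<sigma>' = take i \<sigma>"
    and below: "\<forall>\<mu><n. \<mu> \<noteq> j \<longrightarrow> \<sigma>' ! \<mu> \<le> \<sigma> ! \<mu>"
  shows "(\<Sum>\<mu><n. of_int (\<sigma>' ! \<mu>) * g \<mu>) \<le> (\<Sum>\<mu><n. of_int (\<sigma> ! \<mu>) * g \<mu>)"
proof -
  define d where "d \<mu> = of_int (\<sigma> ! \<mu> - \<sigma>' ! \<mu>) * g \<mu>" for \<mu>
  have same_before: "\<sigma>' ! \<mu> = \<sigma> ! \<mu>" if "\<mu> < i" for \<mu>
    using flip(4) that by (metis nth_take)
  have d_nonneg: "0 \<le> d \<mu>" if "\<mu> < n" "\<mu> \<noteq> j \<or> j \<le> i" for \<mu>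
  proof -
    have "\<sigma>' ! \<mu> \<le> \<sigma> ! \<mu>"
      using below that flip(2,3) same_before[of \<mu>] by (cases "\<mu> = j"; cases "\<mu> = i") (auto simp: le_less)
    then show ?thesis unfolding d_def using g_nonneg that(1) by simp
  qed
  have "0 \<le> (\<Sum>\<mu><n. d \<mu>)"
  proof (cases "i < j \<and> j < n")
    case True
    \<comment> \<open>the upward flip at \<open>j\<close> is paid for by the downward flip at the earlier index \<open>i\<close>\<close>
    have "d j \<ge> - 2 * g j"
      unfolding d_def using sign_vec_nth[OF sv(1), of j] sign_vec_nth[OF sv(2), of j] g_nonneg True
      by auto
    moreover have "d i = 2 * g i" unfolding d_def using flip(2,3) by simp
    moreover have "g j \<le> g i" using g_antimono True by auto
    moreover have "d i + d j \<le> (\<Sum>\<mu><n. d \<mu>)"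
    proof -
      have "(\<Sum>\<mu>\<in>{i, j}. d \<mu>) \<le> (\<Sum>\<mu><n. d \<mu>)"
        by (rule sum_mono2) (use True flip(1) d_nonneg in auto)
      then show ?thesis using True by simp
    qed
    ultimately show ?thesis by linarith
  next
    case False
    then show ?thesis by (intro sum_nonneg) (use d_nonneg in auto)
  qed
  then show ?thesis by (simp add: d_def sum_subtractf left_diff_distrib)
qed

lemma sign_vec_single_minus_from:
  assumes "sign_vec n \<sigma>" "card {\<mu>. m \<le> \<mu> \<and> \<mu> < n \<and> \<sigma> ! \<mu> = -1} = 1"
  obtains j where "\<forall>\<mu>. m \<le> \<mu> \<and> \<mu> < n \<and> \<mu> \<noteq> j \<longrightarrow> \<sigma> ! \<mu> = 1"
proof -
  obtain j where "{\<mu>. m \<le> \<mu> \<and> \<mu> < n \<and> \<sigma> ! \<mu> = -1} = {j}"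
    using assms(2) by (rule card_1_singletonE)
  then show thesis using sign_vec_nth[OF assms(1)] that[of j] by blast
qed

locale frequency_data =
  fixes n :: nat and \<omega> k :: "real list"
  assumes n_pos: "n \<ge> 1"
    and len: "length \<omega> = n" "length k = n"
    and k_pos: "\<forall>i<n. k ! i > 0"
    and ratio_mono: "\<forall>i j. i \<le> j \<and> j < n \<longrightarrow> \<bar>\<omega> ! i / k ! i\<bar> \<le> \<bar>\<omega> ! j / k ! j\<bar>"
    and k_antimono: "\<forall>i j. i \<le> j \<and> j < n \<longrightarrow> k ! i \<ge> k ! j"
begin

definition admissible :: "real \<Rightarrow> bool" where
  "admissible R \<longleftrightarrow> (\<forall>\<mu><n. (k ! \<mu>)^2 * R - (\<omega> ! \<mu>)^2 \<ge> 0)"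

lemma has_pos_root_iff: "has_pos_root \<omega> k \<sigma> \<longleftrightarrow> (\<exists>R>0. admissible R \<and> f_sigma \<omega> k \<sigma> R = 0)"
  unfolding has_pos_root_def admissible_def len by blast

lemma admissible_mono: "admissible R \<Longrightarrow> R \<le> R' \<Longrightarrow> admissible R'"
  unfolding admissible_def by (smt (verit) mult_left_mono zero_le_power2)

lemma f_sigma_eq: "f_sigma \<omega> k \<sigma> R = - R + (\<Sum>\<mu><n. of_int (\<sigma> ! \<mu>) * sqrt ((k ! \<mu>)^2 * R - (\<omega> ! \<mu>)^2)) / n"
  unfolding f_sigma_def len by simp

lemma sqrt_term_antimono:
  assumes "i \<le> j" "j < n" "(k ! j)^2 * R - (\<omega> ! j)^2 \<ge> 0"
  shows "sqrt ((k ! j)^2 * R - (\<omega> ! j)^2) \<le> sqrt ((k ! i)^2 * R - (\<omega> ! i)^2)"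
proof -
  define r where "r \<mu> = (\<omega> ! \<mu> / k ! \<mu>)^2" for \<mu>
  have factor: "(k ! \<mu>)^2 * R - (\<omega> ! \<mu>)^2 = (k ! \<mu>)^2 * (R - r \<mu>)" if "\<mu> < n" for \<mu>
  proof -
    have "k ! \<mu> \<noteq> 0" using k_pos that by auto
    then show ?thesis by (simp add: r_def field_simps)
  qed
  have "r i \<le> r j" unfolding r_def using ratio_mono assms(1,2) by (metis abs_le_square_iff)
  moreover have "0 \<le> R - r j" using assms(3) factor[OF assms(2)] k_pos assms(2)
    by (fastforce simp: zero_le_mult_iff)
  moreover have "(k ! j)^2 \<le> (k ! i)^2"
    using k_antimono k_pos assms(1,2) by (intro power_mono) auto
  ultimately have "(k ! j)^2 * (R - r j) \<le> (k ! i)^2 * (R - r i)" by (intro mult_mono) auto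
  then show ?thesis using factor assms(1,2) by simp
qed

lemma f_sigma_negative_far_out:
  assumes sv: "sign_vec n \<sigma>" and adm: "admissible R"
    and large: "(1 + (\<Sum>\<mu><n. k ! \<mu>))^2 \<le> R"
  shows "f_sigma \<omega> k \<sigma> R < 0"
proof -
  define K where "K = (\<Sum>\<mu><n. k ! \<mu>)"
  have K_nonneg: "0 \<le> K" unfolding K_def using k_pos by (intro sum_nonneg) auto
  have sqrt_R: "1 + K \<le> sqrt R" using large K_nonneg unfolding K_def[symmetric] by (simp add: real_le_rsqrt)
  have sqrt_R_nonneg: "0 \<le> sqrt R" using K_nonneg sqrt_R by linarith
  have term_le: "of_int (\<sigma> ! \<mu>) * sqrt ((k ! \<mu>)^2 * R - (\<omega> ! \<mu>)^2) \<le> k ! \<mu> * sqrt R"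
    if "\<mu> < n" for \<mu>
  proof -
    have sign_le: "of_int (\<sigma> ! \<mu>) * s \<le> s" if "0 \<le> s" for s :: real
      using sign_vec_nth[OF sv \<open>\<mu> < n\<close>] that by auto
    have "of_int (\<sigma> ! \<mu>) * sqrt ((k ! \<mu>)^2 * R - (\<omega> ! \<mu>)^2) \<le> sqrt ((k ! \<mu>)^2 * R - (\<omega> ! \<mu>)^2)"
      using adm that unfolding admissible_def by (intro sign_le) simp
    also have "\<dots> \<le> sqrt ((k ! \<mu>)^2 * R)" by simp
    also have "\<dots> = k ! \<mu> * sqrt R" using k_pos that by (simp add: real_sqrt_mult less_imp_le)
    finally show ?thesis .
  qed
  have "(\<Sum>\<mu><n. of_int (\<sigma> ! \<mu>) * sqrt ((k ! \<mu>)^2 * R - (\<omega> ! \<mu>)^2)) / n \<le> K * sqrt R / n"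
    unfolding K_def sum_distrib_right by (intro divide_right_mono sum_mono) (auto simp: term_le)
  also have "\<dots> \<le> K * sqrt R"
    using divide_left_mono[of 1 "real n" "K * sqrt R"] n_pos K_nonneg sqrt_R_nonneg by simp
  also have "\<dots> < sqrt R * sqrt R" using K_nonneg sqrt_R by (intro mult_strict_right_mono) linarith+
  also have "\<dots> = R" using sqrt_R_nonneg by simp
  finally show ?thesis by (simp add: f_sigma_eq)
qed

lemma no_pos_root_if_dominated:
  assumes sv: "sign_vec n \<sigma>" and no_root: "\<not> has_pos_root \<omega> k \<sigma>"
    and dominated: "\<And>R. R > 0 \<Longrightarrow> admissible R \<Longrightarrow> f_sigma \<omega> k \<sigma>' R \<le> f_sigma \<omega> k \<sigma> R"
  shows "\<not> has_pos_root \<omega> k \<sigma>'"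
proof
  assume "has_pos_root \<omega> k \<sigma>'"
  then obtain R0 where R0: "R0 > 0" "admissible R0" "f_sigma \<omega> k \<sigma>' R0 = 0"
    unfolding has_pos_root_iff by blast
  define M where "M = R0 + (1 + (\<Sum>\<mu><n. k ! \<mu>))^2"
  have "R0 \<le> M" unfolding M_def by simp
  then have "f_sigma \<omega> k \<sigma> M < 0"
    using f_sigma_negative_far_out[OF sv] admissible_mono[OF R0(2)] R0(1) unfolding M_def by simp
  moreover have "0 \<le> f_sigma \<omega> k \<sigma> R0" using dominated[OF R0(1,2)] R0(3) by simp
  moreover have "\<forall>x. R0 \<le> x \<and> x \<le> M \<longrightarrow> isCont (f_sigma \<omega> k \<sigma>) x"
    unfolding f_sigma_def[abs_def] by (intro allI impI continuous_intros)
  ultimately obtain R where "R0 \<le> R" "R \<le> M" "f_sigma \<omega> k \<sigma> R = 0"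
    using IVT2[of "f_sigma \<omega> k \<sigma>" M 0 R0] \<open>R0 \<le> M\<close> by auto
  then have "has_pos_root \<omega> k \<sigma>"
    unfolding has_pos_root_iff using R0(1,2) admissible_mono by (intro exI[of _ R]) auto
  with no_root show False by contradiction
qed

lemma f_sigma_le_after_flip:
  assumes sv: "sign_vec n \<sigma>" "sign_vec n \<sigma>'"
    and flip: "i < n" "\<sigma>' ! i = -1" "\<sigma> ! i = 1" "take i \<sigma>' = take i \<sigma>"
    and below: "\<forall>\<mu><n. \<mu> \<noteq> j \<longrightarrow> \<sigma>' ! \<mu> \<le> \<sigma> ! \<mu>"
    and adm: "admissible R"
  shows "f_sigma \<omega> k \<sigma>' R \<le> f_sigma \<omega> k \<sigma> R"
proof -
  have "(\<Sum>\<mu><n. of_int (\<sigma>' ! \<mu>) * sqrt ((k ! \<mu>)^2 * R - (\<omega> ! \<mu>)^2))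
      \<le> (\<Sum>\<mu><n. of_int (\<sigma> ! \<mu>) * sqrt ((k ! \<mu>)^2 * R - (\<omega> ! \<mu>)^2))"
    using adm sqrt_term_antimono unfolding admissible_def
    by (intro signed_sum_le_after_flip[OF _ _ sv flip below]) auto
  then show ?thesis unfolding f_sigma_eq by (simp add: divide_right_mono)
qed

lemma no_pos_root_of_all_plus:
  assumes no_root: "\<not> has_pos_root \<omega> k (replicate n 1)" and sv: "sign_vec n \<sigma>'"
  shows "\<not> has_pos_root \<omega> k \<sigma>'"
proof (rule no_pos_root_if_dominated[OF _ no_root])
  show "sign_vec n (replicate n 1)" by (auto simp: sign_vec_def set_replicate_conv_if)
  fix R assume adm: "admissible R"
  have "of_int (\<sigma>' ! \<mu>) * sqrt ((k ! \<mu>)^2 * R - (\<omega> ! \<mu>)^2)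
      \<le> of_int (replicate n 1 ! \<mu>) * sqrt ((k ! \<mu>)^2 * R - (\<omega> ! \<mu>)^2)" if "\<mu> < n" for \<mu>
    using sign_vec_nth[OF sv that] adm that unfolding admissible_def by auto
  then show "f_sigma \<omega> k \<sigma>' R \<le> f_sigma \<omega> k (replicate n 1) R"
    unfolding f_sigma_eq by (intro add_left_mono divide_right_mono sum_mono) auto
qed

lemma no_pos_root_of_smaller_suffix:
  assumes sv: "sign_vec n \<sigma>" and no_root: "\<not> has_pos_root \<omega> k \<sigma>" and "m \<le> n"
    and plus_after: "\<forall>\<mu>. m \<le> \<mu> \<and> \<mu> < n \<and> \<mu> \<noteq> j \<longrightarrow> \<sigma> ! \<mu> = 1"
    and sv_suffix: "sign_vec (n - m) \<rho>" and smaller: "bin_val \<rho> < bin_val (drop m \<sigma>)"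
  shows "\<not> has_pos_root \<omega> k (take m \<sigma> @ \<rho>)"
proof -
  define \<tau> where "\<tau> = take m \<sigma> @ \<rho>"
  have len_\<sigma>: "length \<sigma> = n" and len_\<rho>: "length \<rho> = n - m"
    using sv sv_suffix unfolding sign_vec_def by auto
  have sv_\<tau>: "sign_vec n \<tau>"
    using sv sv_suffix \<open>m \<le> n\<close> unfolding sign_vec_def \<tau>_def by (auto dest: in_set_takeD)
  have \<tau>_prefix: "\<tau> ! \<mu> = \<sigma> ! \<mu>" if "\<mu> < m" for \<mu>
    using that \<open>m \<le> n\<close> len_\<sigma> unfolding \<tau>_def by (simp add: nth_append)
  obtain i where i: "i < length \<rho>" "\<rho> ! i = -1" "drop m \<sigma> ! i = 1" "take i \<rho> = take i (drop m \<sigma>)"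
    using bin_val_less_imp_first_flip[OF _ _ _ smaller] sv sv_suffix len_\<sigma> len_\<rho>
    unfolding sign_vec_def by (metis length_drop set_drop_subset subset_trans)
  have flip: "m + i < n" "\<tau> ! (m + i) = -1" "\<sigma> ! (m + i) = 1" "take (m + i) \<tau> = take (m + i) \<sigma>"
    using i \<open>m \<le> n\<close> len_\<sigma> len_\<rho> unfolding \<tau>_def by (simp_all add: nth_append take_add)
  have below: "\<forall>\<mu><n. \<mu> \<noteq> j \<longrightarrow> \<tau> ! \<mu> \<le> \<sigma> ! \<mu>"
  proof (intro allI impI)
    fix \<mu> assume "\<mu> < n" "\<mu> \<noteq> j"
    then show "\<tau> ! \<mu> \<le> \<sigma> ! \<mu>"
      using \<tau>_prefix[of \<mu>] plus_after sign_vec_nth[OF sv_\<tau> \<open>\<mu> < n\<close>] by (cases "\<mu> < m") auto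
  qed
  show ?thesis unfolding \<tau>_def[symmetric]
    using no_pos_root_if_dominated[OF sv no_root] f_sigma_le_after_flip[OF sv sv_\<tau> flip below] by blast
qed

end

theorem theorem2:
  fixes n :: nat and \<omega> k :: "real list"
  assumes n2: "n \<ge> 2"
    and len: "length \<omega> = n" "length k = n"
    and kpos: "\<forall>i<n. k ! i > 0"
    and IC1: "(\<Sum>i<n. \<omega> ! i) = 0"
    and IC2: "\<exists>i<n. \<omega> ! i \<noteq> 0"
    and IC3: "\<forall>i j. i \<le> j \<and> j < n \<longrightarrow> \<bar>\<omega> ! i / k ! i\<bar> \<le> \<bar>\<omega> ! j / k ! j\<bar>"
    and IC4: "\<forall>i j. i \<le> j \<and> j < n \<longrightarrow> k ! i \<ge> k ! j"
  shows
    "(\<not> has_pos_root \<omega> k (replicate n 1) \<longrightarrow>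
        (\<forall>\<sigma>'. sign_vec n \<sigma>' \<longrightarrow> \<not> has_pos_root \<omega> k \<sigma>'))
   \<and> (\<forall>\<sigma>. sign_vec n \<sigma> \<and> card {i. i < n \<and> \<sigma> ! i = -1} = 1 \<and> \<not> has_pos_root \<omega> k \<sigma> \<longrightarrow>
        (\<forall>\<sigma>'. sign_vec n \<sigma>' \<and> bin_val \<sigma>' < bin_val \<sigma> \<longrightarrow> \<not> has_pos_root \<omega> k \<sigma>'))
   \<and> (\<forall>\<sigma> l. sign_vec n \<sigma> \<and> card {i. i < n \<and> \<sigma> ! i = -1} \<ge> 2 \<and> \<not> has_pos_root \<omega> k \<sigma>
        \<and> l < n \<and> \<sigma> ! l = -1 \<and> card {i. l < i \<and> i < n \<and> \<sigma> ! i = -1} = 1 \<longrightarrow>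
        (\<forall>\<rho>2'. sign_vec (n - (l + 1)) \<rho>2' \<and> bin_val \<rho>2' < bin_val (drop (l + 1) \<sigma>) \<longrightarrow>
           \<not> has_pos_root \<omega> k (take (l + 1) \<sigma> @ \<rho>2')))"
proof -
  interpret frequency_data n \<omega> k
    using assms by unfold_locales auto
  have part2: "\<not> has_pos_root \<omega> k \<sigma>'"
    if hyps: "sign_vec n \<sigma>" "card {i. i < n \<and> \<sigma> ! i = -1} = 1" "\<not> has_pos_root \<omega> k \<sigma>"
      "sign_vec n \<sigma>'" "bin_val \<sigma>' < bin_val \<sigma>" for \<sigma> \<sigma>'
  proof -
    obtain j where "\<forall>\<mu>. 0 \<le> \<mu> \<and> \<mu> < n \<and> \<mu> \<noteq> j \<longrightarrow> \<sigma> ! \<mu> = 1"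
      using sign_vec_single_minus_from[of n \<sigma> 0] hyps(1,2) by auto
    then show ?thesis using no_pos_root_of_smaller_suffix[of \<sigma> 0 j \<sigma>'] hyps by simp
  qed
  have part3: "\<not> has_pos_root \<omega> k (take (l + 1) \<sigma> @ \<rho>)"
    if hyps: "sign_vec n \<sigma>" "\<not> has_pos_root \<omega> k \<sigma>" "l < n" "card {i. l < i \<and> i < n \<and> \<sigma> ! i = -1} = 1"
      "sign_vec (n - (l + 1)) \<rho>" "bin_val \<rho> < bin_val (drop (l + 1) \<sigma>)" for \<sigma> l \<rho>
  proof -
    obtain j where "\<forall>\<mu>. l + 1 \<le> \<mu> \<and> \<mu> < n \<and> \<mu> \<noteq> j \<longrightarrow> \<sigma> ! \<mu> = 1"
      using sign_vec_single_minus_from[of n \<sigma> "l + 1"] hyps(1,4) by (auto simp: Suc_le_eq)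
    then show ?thesis using no_pos_root_of_smaller_suffix[of \<sigma> "l + 1" j \<rho>] hyps by simp
  qed
  show ?thesis using no_pos_root_of_all_plus part2 part3 by blast
qed

end
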